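(* Let $(X,d,\theta)$ be a $\theta$-metric space, where $\theta$ is a $B$-action. Then the topological space $(X,\tau_d)$ is metrizable, i.e. there is a metric on $X$ whose metric topology equals $\tau_d$.
   Context: A $B$-action is a map $\theta:[0,\infty)\times[0,\infty)\to[0,\infty)$ that is continuous in each variable separately and satisfies: (i) $\theta(0,0)=0$ and $\theta(s,t)=\theta(t,s)$ for all $s,t\ge0$; (ii) $\theta(x,y)<\theta(s,t)$ whenever either $x\le s,\ y<t$ or $x<s,\ y\le t$; (iii) for each $m\in\mathrm{Im}(\theta)=\{\theta(s,t):s,t\ge0\}$ and each $t\in[0,m]$ there is $s\in[0,m]$ with $\theta(s,t)=m$; (iv) $\theta(s,0)\le s$ for all $s>0$. A $\theta$-metric on a non-empty set $X$ with respect to a $B$-action $\theta$ is a map $d:X\times X\to[0,\infty)$ such that for all $x,y,z\in X$: $d(x,y)=0$ iff $x=y$; $d(x,y)=d(y,x)$; $d(x,z)\le\theta(d(x,y),d(y,z))$. The topology $\tau_d$ consists of all $U\subseteq X$ such that for every $x\in U$ there is $r>0$ with $\{y\in X: d(x,y)<r\}\subseteq U$. *)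

theory Defs
  imports "HOL-Analysis.Analysis"
begin

definition B_action :: "(real \<Rightarrow> real \<Rightarrow> real) \<Rightarrow> bool" where
  "B_action \<theta> \<longleftrightarrow>
     (\<forall>s\<ge>0. \<forall>t\<ge>0. \<theta> s t \<ge> 0) \<and>
     (\<forall>t\<ge>0. continuous_on {0..} (\<lambda>s. \<theta> s t)) \<and>
     (\<forall>s\<ge>0. continuous_on {0..} (\<lambda>t. \<theta> s t)) \<and>
     \<theta> 0 0 = 0 \<and>
     (\<forall>s\<ge>0. \<forall>t\<ge>0. \<theta> s t = \<theta> t s) \<and>
     (\<forall>x\<ge>0. \<forall>y\<ge>0. \<forall>s\<ge>0. \<forall>t\<ge>0.
        ((x \<le> s \<and> y < t) \<or> (x < s \<and> y \<le> t)) \<longrightarrow> \<theta> x y < \<theta> s t) \<and>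
     (\<forall>m \<in> {\<theta> s t | s t. s \<ge> 0 \<and> t \<ge> 0}. \<forall>t\<in>{0..m}. \<exists>s\<in>{0..m}. \<theta> s t = m) \<and>
     (\<forall>s>0. \<theta> s 0 \<le> s)"

definition theta_metric :: "'a set \<Rightarrow> (real \<Rightarrow> real \<Rightarrow> real) \<Rightarrow> ('a \<Rightarrow> 'a \<Rightarrow> real) \<Rightarrow> bool" where
  "theta_metric X \<theta> d \<longleftrightarrow>
     (\<forall>x\<in>X. \<forall>y\<in>X. d x y \<ge> 0) \<and>
     (\<forall>x\<in>X. \<forall>y\<in>X. d x y = 0 \<longleftrightarrow> x = y) \<and>
     (\<forall>x\<in>X. \<forall>y\<in>X. d x y = d y x) \<and>
     (\<forall>x\<in>X. \<forall>y\<in>X. \<forall>z\<in>X. d x z \<le> \<theta> (d x y) (d y z))"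

definition theta_topology :: "'a set \<Rightarrow> ('a \<Rightarrow> 'a \<Rightarrow> real) \<Rightarrow> 'a topology" where
  "theta_topology X d = topology (\<lambda>U. U \<subseteq> X \<and>
     (\<forall>x\<in>U. \<exists>r>0. {y\<in>X. d x y < r} \<subseteq> U))"

end

theory Submission
  imports Defs
begin

text \<open>
  The truncated distances \<open>min (d x z) 1\<close>, viewed as functions of \<open>x\<close> indexed by \<open>z\<close>, embed \<open>X\<close>
  into the bounded functions on \<open>X\<close>; the supremum distance \<open>\<rho>\<close> of this embedding is a metric
  with \<open>min (d x y) 1 \<le> \<rho> x y\<close>, so every \<open>\<rho>\<close>-ball contains a \<open>d\<close>-ball. Conversely, continuity
  of \<open>\<theta>\<close> together with \<open>\<theta> 0 t \<le> t\<close> and compactness of \<open>[0,1]\<close> yields, for every \<open>e > 0\<close>, some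
  \<open>\<delta> > 0\<close> with \<open>\<theta> \<delta> t < t + e\<close> on \<open>[0,1]\<close>; by the \<open>\<theta>\<close>-triangle inequality the truncated
  distances are then equicontinuous, so every \<open>d\<close>-ball contains a \<open>\<rho>\<close>-ball.
\<close>

definition truncated_sup_dist :: "'a set \<Rightarrow> ('a \<Rightarrow> 'a \<Rightarrow> real) \<Rightarrow> 'a \<Rightarrow> 'a \<Rightarrow> real" where
  "truncated_sup_dist X d x y =
     (if x \<in> X \<and> y \<in> X then (SUP z\<in>X. \<bar>min (d x z) 1 - min (d y z) 1\<bar>) else 0)"

locale nonneg_dist =
  fixes X :: "'a set" and d :: "'a \<Rightarrow> 'a \<Rightarrow> real"
  assumes nonneg: "\<And>x y. x \<in> X \<Longrightarrow> y \<in> X \<Longrightarrow> 0 \<le> d x y"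
    and zero_iff: "\<And>x y. x \<in> X \<Longrightarrow> y \<in> X \<Longrightarrow> d x y = 0 \<longleftrightarrow> x = y"
begin

abbreviation \<rho> :: "'a \<Rightarrow> 'a \<Rightarrow> real" where
  "\<rho> \<equiv> truncated_sup_dist X d"

lemma truncated_sup_dist_upper:
  assumes "x \<in> X" "y \<in> X" "z \<in> X"
  shows "\<bar>min (d x z) 1 - min (d y z) 1\<bar> \<le> \<rho> x y"
proof -
  have "\<bar>min (d x w) 1 - min (d y w) 1\<bar> \<le> 1" if "w \<in> X" for w
    using nonneg[of x w] nonneg[of y w] assms that by auto
  then have "bdd_above ((\<lambda>z. \<bar>min (d x z) 1 - min (d y z) 1\<bar>) ` X)"
    by (intro bdd_aboveI[of _ 1]) auto
  then show ?thesis
    unfolding truncated_sup_dist_def using assms cSUP_upper[OF assms(3)] by simp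
qed

lemma truncated_sup_dist_least:
  assumes "x \<in> X" "y \<in> X" "\<And>z. z \<in> X \<Longrightarrow> \<bar>min (d x z) 1 - min (d y z) 1\<bar> \<le> c"
  shows "\<rho> x y \<le> c"
  unfolding truncated_sup_dist_def using assms by (auto intro: cSUP_least)

lemma min_dist_le_truncated_sup_dist:
  assumes "x \<in> X" "y \<in> X"
  shows "min (d x y) 1 \<le> \<rho> x y"
  using truncated_sup_dist_upper[OF assms assms(2)] zero_iff[of y y] assms by simp

lemma Metric_space_truncated_sup_dist: "Metric_space X \<rho>"
proof
  fix x y
  show "0 \<le> \<rho> x y"
    using truncated_sup_dist_upper[of x y x] by (cases "x \<in> X \<and> y \<in> X") (auto simp: truncated_sup_dist_def)
  show "\<rho> x y = \<rho> y x"
    unfolding truncated_sup_dist_def by (auto simp: abs_minus_commute)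
next
  fix x y assume xy: "x \<in> X" "y \<in> X"
  show "\<rho> x y = 0 \<longleftrightarrow> x = y"
  proof
    assume "\<rho> x y = 0"
    then have "d x y \<le> 0"
      using min_dist_le_truncated_sup_dist[OF xy] by (auto simp: min_def split: if_splits)
    then show "x = y" using nonneg[OF xy] zero_iff[OF xy] by simp
  next
    assume "x = y"
    then have "\<rho> x y \<le> 0" using truncated_sup_dist_least[OF xy, of 0] by simp
    moreover have "0 \<le> \<rho> x y" using truncated_sup_dist_upper[OF xy xy(1)] by linarith
    ultimately show "\<rho> x y = 0" by linarith
  qed
next
  fix x y z assume xyz: "x \<in> X" "y \<in> X" "z \<in> X"
  show "\<rho> x z \<le> \<rho> x y + \<rho> y z"
  proof (rule truncated_sup_dist_least)
    fix w assume w: "w \<in> X"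
    have "\<bar>min (d x w) 1 - min (d z w) 1\<bar>
        \<le> \<bar>min (d x w) 1 - min (d y w) 1\<bar> + \<bar>min (d y w) 1 - min (d z w) 1\<bar>"
      by linarith
    also have "\<dots> \<le> \<rho> x y + \<rho> y z"
      using truncated_sup_dist_upper xyz w by (meson add_mono)
    finally show "\<bar>min (d x w) 1 - min (d z w) 1\<bar> \<le> \<rho> x y + \<rho> y z" .
  qed (use xyz in auto)
qed

lemma theta_topology_eq_mtopology_truncated_sup_dist:
  assumes equicont: "\<And>x e. x \<in> X \<Longrightarrow> e > 0 \<Longrightarrow>
      \<exists>\<delta>>0. \<forall>y\<in>X. \<forall>z\<in>X. d x y < \<delta> \<longrightarrow> \<bar>min (d x z) 1 - min (d y z) 1\<bar> \<le> e"
  shows "theta_topology X d = Metric_space.mtopology X \<rho>"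
proof -
  interpret M: Metric_space X \<rho> by (rule Metric_space_truncated_sup_dist)
  have balls_iff: "(\<forall>x\<in>U. \<exists>r>0. {y \<in> X. d x y < r} \<subseteq> U) \<longleftrightarrow>
        (\<forall>x\<in>U. \<exists>r>0. M.mball x r \<subseteq> U)" if "U \<subseteq> X" for U
  proof (intro iffI ballI)
    fix x assume "\<forall>x\<in>U. \<exists>r>0. {y \<in> X. d x y < r} \<subseteq> U" "x \<in> U"
    then obtain r where r: "r > 0" "{y \<in> X. d x y < r} \<subseteq> U" by blast
    have "M.mball x (min r 1) \<subseteq> U"
    proof
      fix y assume "y \<in> M.mball x (min r 1)"
      then have y: "x \<in> X" "y \<in> X" "\<rho> x y < min r 1" by auto
      then have "d x y < r"
        using min_dist_le_truncated_sup_dist[of x y] by (auto simp: min_def split: if_splits)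
      then show "y \<in> U" using r y by blast
    qed
    then show "\<exists>r>0. M.mball x r \<subseteq> U" using r by (intro exI[of _ "min r 1"]) auto
  next
    fix x assume "\<forall>x\<in>U. \<exists>r>0. M.mball x r \<subseteq> U" and xU: "x \<in> U"
    then obtain r where r: "r > 0" "M.mball x r \<subseteq> U" by blast
    have x: "x \<in> X" using xU that by blast
    obtain \<delta> where \<delta>: "\<delta> > 0" "\<forall>y\<in>X. \<forall>z\<in>X. d x y < \<delta> \<longrightarrow> \<bar>min (d x z) 1 - min (d y z) 1\<bar> \<le> r/2"
      using equicont[OF x, of "r/2"] r by (meson half_gt_zero)
    have "{y \<in> X. d x y < \<delta>} \<subseteq> U"
    proof
      fix y assume "y \<in> {y \<in> X. d x y < \<delta>}"
      then have y: "y \<in> X" "d x y < \<delta>" by auto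
      have "\<rho> x y \<le> r/2" using \<delta> x y by (intro truncated_sup_dist_least) auto
      then show "y \<in> U" using r x y by auto
    qed
    then show "\<exists>r>0. {y \<in> X. d x y < r} \<subseteq> U" using \<delta> by blast
  qed
  have "(\<lambda>U. U \<subseteq> X \<and> (\<forall>x\<in>U. \<exists>r>0. {y \<in> X. d x y < r} \<subseteq> U)) = M.mopen"
  proof
    fix U
    show "(U \<subseteq> X \<and> (\<forall>x\<in>U. \<exists>r>0. {y \<in> X. d x y < r} \<subseteq> U)) = M.mopen U"
      unfolding M.mopen_def using balls_iff[of U] by auto
  qed
  then show ?thesis
    unfolding theta_topology_def M.mtopology_def by simp
qed

end

lemma B_actionD:
  assumes "B_action \<theta>"
  shows B_action_continuous_left: "\<And>t. 0 \<le> t \<Longrightarrow> continuous_on {0..} (\<lambda>s. \<theta> s t)"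
    and B_action_continuous_right: "\<And>s. 0 \<le> s \<Longrightarrow> continuous_on {0..} (\<lambda>t. \<theta> s t)"
    and B_action_zero: "\<theta> 0 0 = 0"
    and B_action_commute: "\<And>s t. 0 \<le> s \<Longrightarrow> 0 \<le> t \<Longrightarrow> \<theta> s t = \<theta> t s"
    and B_action_strict_mono_left: "\<And>a b t. 0 \<le> a \<Longrightarrow> a < b \<Longrightarrow> 0 \<le> t \<Longrightarrow> \<theta> a t < \<theta> b t"
    and B_action_le_left: "\<And>s. 0 < s \<Longrightarrow> \<theta> s 0 \<le> s"
proof -
  note A = assms[unfolded B_action_def]
  show "\<And>t. 0 \<le> t \<Longrightarrow> continuous_on {0..} (\<lambda>s. \<theta> s t)"
    and "\<And>s. 0 \<le> s \<Longrightarrow> continuous_on {0..} (\<lambda>t. \<theta> s t)"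
    and "\<theta> 0 0 = 0"
    and "\<And>s t. 0 \<le> s \<Longrightarrow> 0 \<le> t \<Longrightarrow> \<theta> s t = \<theta> t s"
    and "\<And>s. 0 < s \<Longrightarrow> \<theta> s 0 \<le> s"
    using A by simp_all
  have "\<forall>x\<ge>0. \<forall>y\<ge>0. \<forall>s\<ge>0. \<forall>t\<ge>0. x < s \<and> y \<le> t \<longrightarrow> \<theta> x y < \<theta> s t"
    using A by blast
  then show "\<And>a b t. 0 \<le> a \<Longrightarrow> a < b \<Longrightarrow> 0 \<le> t \<Longrightarrow> \<theta> a t < \<theta> b t"
    by auto
qed

lemma B_action_mono_left:
  assumes "B_action \<theta>" "0 \<le> a" "a \<le> b" "0 \<le> t"
  shows "\<theta> a t \<le> \<theta> b t"
  using B_action_strict_mono_left[OF assms(1)] assms(2-4) by (cases "a = b") (auto intro: less_imp_le)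

lemma B_action_zero_left_le:
  assumes "B_action \<theta>" "0 \<le> t"
  shows "\<theta> 0 t \<le> t"
  using B_action_zero[OF assms(1)] B_action_le_left[OF assms(1), of t] B_action_commute[OF assms(1), of 0 t] assms(2)
  by (cases "t = 0") auto

lemma B_action_small_left_near:
  assumes B: "B_action \<theta>" and e: "e > 0" and t: "0 \<le> t"
  shows "\<exists>D>0. \<exists>E>0. \<forall>s\<ge>0. \<bar>s - t\<bar> < E \<longrightarrow> \<theta> D s < s + e"
proof -
  have "\<exists>d>0. \<forall>s\<in>{0..}. dist s 0 < d \<longrightarrow> dist (\<theta> s t) (\<theta> 0 t) < e/2"
    by (rule B_action_continuous_left[OF B t, unfolded continuous_on_iff, rule_format]) (use e in auto)
  then obtain d where d: "d > 0" "\<forall>s\<in>{0..}. dist s 0 < d \<longrightarrow> dist (\<theta> s t) (\<theta> 0 t) < e/2"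
    by blast
  define D where "D = d/2"
  have "dist (\<theta> D t) (\<theta> 0 t) < e/2" using d by (simp add: D_def)
  then have "\<theta> D t < \<theta> 0 t + e/2" unfolding dist_real_def by linarith
  then have D: "D > 0" "\<theta> D t < t + e/2"
    using d(1) B_action_zero_left_le[OF B t] by (auto simp: D_def)
  have "\<exists>E>0. \<forall>s\<in>{0..}. dist s t < E \<longrightarrow> dist (\<theta> D s) (\<theta> D t) < e/4"
    by (rule B_action_continuous_right[OF B, of D, unfolded continuous_on_iff, rule_format])
      (use D(1) e t in auto)
  then obtain E where E: "E > 0" "\<forall>s\<in>{0..}. dist s t < E \<longrightarrow> dist (\<theta> D s) (\<theta> D t) < e/4"
    by blast
  have "\<theta> D s < s + e" if "0 \<le> s" "\<bar>s - t\<bar> < min E (e/4)" for s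
  proof -
    have "\<bar>\<theta> D s - \<theta> D t\<bar> < e/4" using that E by (simp add: dist_real_def)
    then show ?thesis using that D(2) by linarith
  qed
  moreover have "min E (e/4) > 0" using E(1) e by simp
  ultimately show ?thesis using D(1) by blast
qed

lemma B_action_uniformly_small_left:
  assumes B: "B_action \<theta>" and e: "e > 0" and K: "compact K" "K \<subseteq> {0..}"
  shows "\<exists>\<delta>>0. \<forall>t\<in>K. \<theta> \<delta> t < t + e"
proof -
  have "\<forall>t\<in>K. \<exists>D E. D > 0 \<and> E > 0 \<and> (\<forall>s\<ge>0. \<bar>s - t\<bar> < E \<longrightarrow> \<theta> D s < s + e)"
    using B_action_small_left_near[OF B e] K(2) by auto
  then obtain D E where DE: "\<And>t. t \<in> K \<Longrightarrow> D t > 0 \<and> E t > 0 \<and> (\<forall>s\<ge>0. \<bar>s - t\<bar> < E t \<longrightarrow> \<theta> (D t) s < s + e)"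
    by metis
  have "K \<subseteq> (\<Union>t\<in>K. ball t (E t))" using DE by force
  then obtain C where C: "C \<subseteq> K" "finite C" "K \<subseteq> (\<Union>t\<in>C. ball t (E t))"
    by (rule compactE_image[OF K(1) open_ball])
  define \<delta> where "\<delta> = Min (insert 1 (D ` C))"
  have \<delta>: "\<delta> > 0" "\<And>t. t \<in> C \<Longrightarrow> \<delta> \<le> D t"
    unfolding \<delta>_def using C DE by auto
  have "\<theta> \<delta> s < s + e" if s: "s \<in> K" for s
  proof -
    obtain t where t: "t \<in> C" "\<bar>s - t\<bar> < E t" using C(3) s by (force simp: dist_real_def)
    have "\<theta> \<delta> s \<le> \<theta> (D t) s" using B_action_mono_left[OF B] \<delta> t s K(2) by auto
    also have "\<dots> < s + e" using DE[of t] t C(1) s K(2) by auto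
    finally show ?thesis .
  qed
  then show ?thesis using \<delta>(1) by blast
qed

lemma theta_metricD:
  assumes "theta_metric X \<theta> d"
  shows theta_metric_nonneg: "\<And>x y. x \<in> X \<Longrightarrow> y \<in> X \<Longrightarrow> 0 \<le> d x y"
    and theta_metric_zero_iff: "\<And>x y. x \<in> X \<Longrightarrow> y \<in> X \<Longrightarrow> d x y = 0 \<longleftrightarrow> x = y"
    and theta_metric_commute: "\<And>x y. x \<in> X \<Longrightarrow> y \<in> X \<Longrightarrow> d x y = d y x"
    and theta_metric_triangle: "\<And>x y z. x \<in> X \<Longrightarrow> y \<in> X \<Longrightarrow> z \<in> X \<Longrightarrow> d x z \<le> \<theta> (d x y) (d y z)"
  using assms unfolding theta_metric_def by simp_all

lemma theta_metric_truncated_dist_equicontinuous: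
  assumes B: "B_action \<theta>" and d: "theta_metric X \<theta> d" and x: "x \<in> X" and e: "e > 0"
  shows "\<exists>\<delta>>0. \<forall>y\<in>X. \<forall>z\<in>X. d x y < \<delta> \<longrightarrow> \<bar>min (d x z) 1 - min (d y z) 1\<bar> \<le> e"
proof -
  obtain \<delta> where \<delta>: "\<delta> > 0" "\<forall>t\<in>{0..1}. \<theta> \<delta> t < t + e"
    using B_action_uniformly_small_left[OF B e, of "{0..1}"] by auto
  have one_side: "min (d a z) 1 - min (d b z) 1 \<le> e"
    if abz: "a \<in> X" "b \<in> X" "z \<in> X" "d a b < \<delta>" for a b z
  proof (cases "d b z \<le> 1")
    case True
    have "d a z \<le> \<theta> (d a b) (d b z)" using theta_metric_triangle[OF d] abz by blast
    also have "\<dots> \<le> \<theta> \<delta> (d b z)"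
      using B_action_mono_left[OF B] theta_metric_nonneg[OF d] abz by auto
    also have "\<dots> < d b z + e" using \<delta>(2) True theta_metric_nonneg[OF d] abz by auto
    finally show ?thesis using True by auto
  qed (use e in auto)
  have "\<bar>min (d x z) 1 - min (d y z) 1\<bar> \<le> e" if "y \<in> X" "z \<in> X" "d x y < \<delta>" for y z
    using one_side[OF x that] one_side[OF that(1) x that(2)] theta_metric_commute[OF d x that(1)] that(3)
    by (simp add: abs_le_iff)
  then show ?thesis using \<delta>(1) by blast
qed

theorem mainTheorem6:
  fixes X :: "'a set" and \<theta> :: "real \<Rightarrow> real \<Rightarrow> real" and d :: "'a \<Rightarrow> 'a \<Rightarrow> real"
  assumes "X \<noteq> {}" and "B_action \<theta>" and "theta_metric X \<theta> d"
  shows "metrizable_space (theta_topology X d)"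
proof -
  interpret nonneg_dist X d
    using theta_metric_nonneg[OF assms(3)] theta_metric_zero_iff[OF assms(3)] by unfold_locales
  have "theta_topology X d = Metric_space.mtopology X \<rho>"
    using theta_metric_truncated_dist_equicontinuous[OF assms(2,3)]
    by (rule theta_topology_eq_mtopology_truncated_sup_dist)
  then show ?thesis
    using Metric_space_truncated_sup_dist unfolding metrizable_space_def by blast
qed

end
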